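(* Let $(\alpha,\omega,\beta)$ be an irreducible feasible endpoint constraint for which equality holds in $\sum_{i=0}^Ii\omega_i+(I+1)\omega_{I+}\le\sum_{k}k\alpha_k+\beta$, and let $\pi^*$ be the unique minimizer of $\sum_{k\in\mathcal{K}}\alpha_kD(\pi_{(k)}\|\mathcal{P}(\beta))$ subject to $\sum_{k\in\mathcal{K}}\alpha_k\sum_jj\pi_{k,j}=\beta$ and $\omega_i=\sum_{k\le i,k\in\mathcal{K}}\alpha_k\pi_{k,i-k}$ ($0\le i\le I$). Then there exist positive constants $\{D_k\}_{k\in\mathcal{K}}$ and $\{W_i\}_{i\in\mathcal{I}(\omega)}$ such that $$\pi^*_{k,j}=\begin{cases}D_k\mathcal{P}_j(\beta)W_{k+j},& k\in\mathcal{K},\ k+j\in\mathcal{I}(\omega),\\ 0,&\text{otherwise.}\end{cases}$$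
   Context: Fix $I\ge0$, $\beta>0$. $\alpha,\omega\in S_I=\{\gamma\in\mathbb{R}^{I+2}:\gamma_j\ge0,\sum\gamma_j=1\}$, components $\alpha_0,\dots,\alpha_{I+1}$ ($\alpha_0>0$), $\omega_0,\dots,\omega_I,\omega_{I+}$. $\mathcal{K}=\{k:\alpha_k>0\}$. Feasible: $\sum_{j\le i}\alpha_j\ge\sum_{j\le i}\omega_j$ ($i=0,\dots,I$) and $\sum_{i=0}^Ii\omega_i+(I+1)\omega_{I+}\le\sum_kk\alpha_k+\beta$; irreducible: the first inequalities strict for $i<I$. Standing convention of the paper: in the equality (polynomial) case the problem is formulated (replacing $I$ by $I+1$ if needed) so that $\omega_{I+}=0$. $\pi_{(k)}=(\pi_{k,j})_{j\ge0}$ are probability distributions on the nonnegative integers; $\mathcal{P}_j(t)=e^{-t}t^j/j!$; $D$ is relative entropy. $\mathcal{I}(\omega)$: integers $i\ge0$ with $i\le I,\omega_i>0$, or $i>I,\omega_{I+}>0$. *)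

theory Defs
  imports "HOL-Analysis.Analysis"
begin

definition poisson :: "nat \<Rightarrow> real \<Rightarrow> real" where
  "poisson j t = exp (- t) * t ^ j / fact j"

text \<open>Relative entropy D(p||q) = sum_j p_j ln(p_j/q_j) of distributions on the
  nonnegative integers, with value in [0,\<infinity>]; 0 ln 0 = 0 (automatic since 0 * x = 0).
  The series is +\<infinity> when it does not converge (its negative part is always summable).\<close>
definition rel_entropy :: "(nat \<Rightarrow> real) \<Rightarrow> (nat \<Rightarrow> real) \<Rightarrow> ereal" where
  "rel_entropy p q =
     (if summable (\<lambda>j. p j * ln (p j / q j))
      then ereal (\<Sum>j. p j * ln (p j / q j)) else \<infinity>)"

definition prob_dist :: "(nat \<Rightarrow> real) \<Rightarrow> bool" where
  "prob_dist p \<longleftrightarrow> (\<forall>j. 0 \<le> p j) \<and> p sums 1"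

definition Kset :: "nat \<Rightarrow> (nat \<Rightarrow> real) \<Rightarrow> nat set" where
  "Kset I \<alpha> = {k. k \<le> Suc I \<and> 0 < \<alpha> k}"

text \<open>The index set I(omega); omega_0..omega_I given by \<omega>, omega_{I+} by \<omega>p.\<close>
definition Iset :: "nat \<Rightarrow> (nat \<Rightarrow> real) \<Rightarrow> real \<Rightarrow> nat set" where
  "Iset I \<omega> \<omega>p = {i. (i \<le> I \<and> 0 < \<omega> i) \<or> (I < i \<and> 0 < \<omega>p)}"

definition pi_feasible ::
  "nat \<Rightarrow> (nat \<Rightarrow> real) \<Rightarrow> (nat \<Rightarrow> real) \<Rightarrow> real \<Rightarrow> (nat \<Rightarrow> nat \<Rightarrow> real) \<Rightarrow> bool" where
  "pi_feasible I \<alpha> \<omega> \<beta> \<pi> \<longleftrightarrow>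
     (\<forall>k\<in>Kset I \<alpha>. prob_dist (\<pi> k) \<and> summable (\<lambda>j. real j * \<pi> k j)) \<and>
     (\<Sum>k\<in>Kset I \<alpha>. \<alpha> k * (\<Sum>j. real j * \<pi> k j)) = \<beta> \<and>
     (\<forall>i\<le>I. \<omega> i = (\<Sum>k\<in>{k\<in>Kset I \<alpha>. k \<le> i}. \<alpha> k * \<pi> k (i - k)))"

definition objective ::
  "nat \<Rightarrow> (nat \<Rightarrow> real) \<Rightarrow> real \<Rightarrow> (nat \<Rightarrow> nat \<Rightarrow> real) \<Rightarrow> ereal" where
  "objective I \<alpha> \<beta> \<pi> =
     (\<Sum>k\<in>Kset I \<alpha>. ereal (\<alpha> k) * rel_entropy (\<pi> k) (\<lambda>j. poisson j \<beta>))"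

end

theory Submission
  imports Defs
begin

(* As
   omega_{I+} = 0, every feasible row k is supported on the displacements j with k + j <= I, so
   the objective is a finite sum of terms y ln (y / P_j(beta)).
   For rows k /= r and endpoints a /= b, moving mass 1/alpha_k from endpoint a to b in row k and
   mass 1/alpha_r from b back to a in row r preserves all constraints. Since y ln y has slope
   -infinity at 0, such a swap would lower the entropy if it fed an empty cell; this forces the
   minimiser to be positive wherever the constraints allow (irreducibility is what makes the
   last endpoint I reachable from every row). First-order stationarity under the swap then says
   that g_k(i) = pi*_{k,i-k} / P_{i-k}(beta) satisfies g_k(a) g_r(b) = g_k(b) g_r(a), whence
   g_k(i) = D_k W_i with D_k = g_k(I) / g_0(I) and W_i = g_0(i). *)

section \<open>Relative entropy along a perturbation\<close>

lemma mult_ln_div_diff_le: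
  fixes a b c :: real
  assumes "0 \<le> a" "0 < b" "0 < c"
  shows "b * ln (b / c) - a * ln (a / c) \<le> (b - a) * (ln (b / c) + 1)"
proof (cases "a = 0")
  case False
  with assms have a: "0 < a" by simp
  have "a * ln (b / a) \<le> b - a"
    using ln_le_minus_one[of "b / a"] a assms by (simp add: field_simps)
  moreover have "a * ln (b / c) = a * ln (a / c) + a * ln (b / a)"
    using a assms by (simp add: ln_div algebra_simps)
  ultimately show ?thesis by (simp add: algebra_simps)
qed (use assms in simp)

lemma eventually_perturbation_pos:
  fixes x \<Delta> :: "'a \<Rightarrow> real"
  assumes "finite S" and "\<forall>s\<in>S. 0 \<le> x s" and "\<forall>s\<in>S. x s = 0 \<longrightarrow> 0 \<le> \<Delta> s"
  shows "\<forall>\<^sub>F \<epsilon> in at_right 0. \<forall>s\<in>S. \<Delta> s \<noteq> 0 \<longrightarrow> 0 < x s + \<epsilon> * \<Delta> s"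
proof (rule eventually_ball_finite[OF assms(1)], intro ballI)
  fix s assume s: "s \<in> S"
  show "\<forall>\<^sub>F \<epsilon> in at_right 0. \<Delta> s \<noteq> 0 \<longrightarrow> 0 < x s + \<epsilon> * \<Delta> s"
  proof (cases "x s = 0")
    case True
    with assms s have "0 \<le> \<Delta> s" by blast
    with True show ?thesis
      by (auto simp: eventually_at_right_field intro!: exI[of _ 1])
  next
    case False
    with assms s have "0 < x s" by force
    moreover have "((\<lambda>\<epsilon>. x s + \<epsilon> * \<Delta> s) \<longlongrightarrow> x s + 0 * \<Delta> s) (at_right 0)"
      by (intro tendsto_intros)
    ultimately have "\<forall>\<^sub>F \<epsilon> in at_right 0. 0 < x s + \<epsilon> * \<Delta> s"
      using order_tendstoD(1) by fastforce
    then show ?thesis by eventually_elim simp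
  qed
qed

lemma entropy_slope_split:
  fixes x \<Delta> w c :: "'a \<Rightarrow> real"
  assumes S: "finite S" and Z: "Z \<subseteq> S" and singular: "\<forall>s\<in>Z. x s = 0 \<and> 0 < \<Delta> s \<and> 0 < c s"
    and \<epsilon>: "0 < \<epsilon>"
  shows "(\<Sum>s\<in>S. w s * \<Delta> s * (ln ((x s + \<epsilon> * \<Delta> s) / c s) + 1)) =
    (\<Sum>s\<in>Z. w s * \<Delta> s) * ln \<epsilon> + (\<Sum>s\<in>Z. w s * \<Delta> s * (ln (\<Delta> s / c s) + 1)) +
    (\<Sum>s\<in>S - Z. w s * \<Delta> s * (ln ((x s + \<epsilon> * \<Delta> s) / c s) + 1))"
proof -
  have "(\<Sum>s\<in>Z. w s * \<Delta> s * (ln ((x s + \<epsilon> * \<Delta> s) / c s) + 1)) =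
      (\<Sum>s\<in>Z. w s * \<Delta> s * ln \<epsilon> + w s * \<Delta> s * (ln (\<Delta> s / c s) + 1))"
  proof (rule sum.cong[OF refl])
    fix s assume "s \<in> Z"
    with singular have "x s = 0" "0 < \<Delta> s" "0 < c s" by auto
    then have "ln ((x s + \<epsilon> * \<Delta> s) / c s) = ln \<epsilon> + ln (\<Delta> s / c s)"
      using \<epsilon> by (simp add: ln_mult ln_div)
    then show "w s * \<Delta> s * (ln ((x s + \<epsilon> * \<Delta> s) / c s) + 1) =
        w s * \<Delta> s * ln \<epsilon> + w s * \<Delta> s * (ln (\<Delta> s / c s) + 1)"
      by (simp add: algebra_simps)
  qed
  then show ?thesis
    using sum.subset_diff[OF Z S, of "\<lambda>s. w s * \<Delta> s * (ln ((x s + \<epsilon> * \<Delta> s) / c s) + 1)"]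
    by (simp add: sum.distrib sum_distrib_right)
qed

lemma entropy_slope_tendsto:
  fixes x \<Delta> w c :: "'a \<Rightarrow> real"
  assumes "\<forall>s\<in>S. 0 < c s" and "\<forall>s\<in>S. \<Delta> s \<noteq> 0 \<longrightarrow> 0 < x s"
  shows "((\<lambda>\<epsilon>. \<Sum>s\<in>S. w s * \<Delta> s * (ln ((x s + \<epsilon> * \<Delta> s) / c s) + 1)) \<longlongrightarrow>
    (\<Sum>s\<in>S. w s * \<Delta> s * (ln (x s / c s) + 1))) (at_right 0)"
proof (rule tendsto_sum)
  fix s assume s: "s \<in> S"
  show "((\<lambda>\<epsilon>. w s * \<Delta> s * (ln ((x s + \<epsilon> * \<Delta> s) / c s) + 1)) \<longlongrightarrow>
      w s * \<Delta> s * (ln (x s / c s) + 1)) (at_right 0)"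
  proof (cases "\<Delta> s = 0")
    case False
    with assms s have "((\<lambda>\<epsilon>. w s * \<Delta> s * (ln ((x s + \<epsilon> * \<Delta> s) / c s) + 1)) \<longlongrightarrow>
        w s * \<Delta> s * (ln ((x s + 0 * \<Delta> s) / c s) + 1)) (at_right 0)"
      by (intro tendsto_intros) auto
    then show ?thesis by simp
  qed simp
qed

lemma entropy_slope_eventually_neg:
  fixes x \<Delta> w c :: "'a \<Rightarrow> real"
  assumes S: "finite S" and w: "\<forall>s\<in>S. 0 < w s" and c: "\<forall>s\<in>S. 0 < c s"
    and x: "\<forall>s\<in>S. 0 \<le> x s" and \<Delta>: "\<forall>s\<in>S. x s = 0 \<longrightarrow> 0 \<le> \<Delta> s"
    and descent: "(\<exists>s\<in>S. x s = 0 \<and> \<Delta> s \<noteq> 0) \<or> (\<Sum>s\<in>S. w s * \<Delta> s * (ln (x s / c s) + 1)) < 0"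
  shows "\<forall>\<^sub>F \<epsilon> in at_right 0. (\<Sum>s\<in>S. w s * \<Delta> s * (ln ((x s + \<epsilon> * \<Delta> s) / c s) + 1)) < 0"
proof -
  \<comment> \<open>Cells in Z contribute the singular part A ln \<epsilon>, which tends to -\<infinity> unless Z is empty.\<close>
  define Z where "Z = {s\<in>S. x s = 0 \<and> \<Delta> s \<noteq> 0}"
  define A where "A = (\<Sum>s\<in>Z. w s * \<Delta> s)"
  define H where "H \<epsilon> = (\<Sum>s\<in>Z. w s * \<Delta> s * (ln (\<Delta> s / c s) + 1)) +
    (\<Sum>s\<in>S - Z. w s * \<Delta> s * (ln ((x s + \<epsilon> * \<Delta> s) / c s) + 1))" for \<epsilon>
  have Z: "Z \<subseteq> S" "\<forall>s\<in>Z. x s = 0 \<and> 0 < \<Delta> s \<and> 0 < c s"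
    using \<Delta> c by (force simp: Z_def)+
  have "((\<lambda>\<epsilon>. \<Sum>s\<in>S - Z. w s * \<Delta> s * (ln ((x s + \<epsilon> * \<Delta> s) / c s) + 1)) \<longlongrightarrow>
      (\<Sum>s\<in>S - Z. w s * \<Delta> s * (ln (x s / c s) + 1))) (at_right 0)"
    using c x by (intro entropy_slope_tendsto) (force simp: Z_def)+
  then have H: "(H \<longlongrightarrow> H 0) (at_right 0)"
    unfolding H_def by (intro tendsto_add tendsto_const) simp
  have "\<forall>\<^sub>F \<epsilon> in at_right 0. A * ln \<epsilon> + H \<epsilon> < 0"
  proof (cases "Z = {}")
    case True
    then have "(\<Sum>s\<in>S. w s * \<Delta> s * (ln (x s / c s) + 1)) < 0"
      using descent by (auto simp: Z_def)
    then have "H 0 < 0" by (simp add: H_def True)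
    then show ?thesis
      using order_tendstoD(2)[OF H] by (simp add: A_def True)
  next
    case False
    then have "0 < A" unfolding A_def using S Z w by (intro sum_pos) (auto intro: finite_subset)
    then have "LIM \<epsilon> at_right 0. A * ln \<epsilon> :> at_bot"
      using filterlim_tendsto_pos_mult_at_bot[OF tendsto_const _ ln_at_0] by blast
    then have "LIM \<epsilon> at_right 0. H \<epsilon> + A * ln \<epsilon> :> at_bot"
      by (simp add: filterlim_tendsto_add_at_bot_iff[OF H])
    then show ?thesis by (simp add: filterlim_at_bot_dense add.commute)
  qed
  with eventually_at_right_less show ?thesis
    by eventually_elim (simp add: entropy_slope_split[OF S Z] A_def H_def add.assoc)
qed

lemma weighted_entropy_eventually_less:
  fixes x \<Delta> w c :: "'a \<Rightarrow> real"
  assumes S: "finite S" and w: "\<forall>s\<in>S. 0 < w s" and c: "\<forall>s\<in>S. 0 < c s"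
    and x: "\<forall>s\<in>S. 0 \<le> x s" and \<Delta>: "\<forall>s\<in>S. x s = 0 \<longrightarrow> 0 \<le> \<Delta> s"
    and descent: "(\<exists>s\<in>S. x s = 0 \<and> \<Delta> s \<noteq> 0) \<or> (\<Sum>s\<in>S. w s * \<Delta> s * (ln (x s / c s) + 1)) < 0"
  shows "\<forall>\<^sub>F \<epsilon> in at_right 0. (\<Sum>s\<in>S. w s * (x s + \<epsilon> * \<Delta> s) * ln ((x s + \<epsilon> * \<Delta> s) / c s))
                               < (\<Sum>s\<in>S. w s * x s * ln (x s / c s))"
  using eventually_at_right_less eventually_perturbation_pos[OF S x \<Delta>]
    entropy_slope_eventually_neg[OF assms]
proof eventually_elim
  case (elim \<epsilon>)
  let ?y = "\<lambda>s. x s + \<epsilon> * \<Delta> s"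
  have "(\<Sum>s\<in>S. w s * ?y s * ln (?y s / c s)) - (\<Sum>s\<in>S. w s * x s * ln (x s / c s))
      \<le> (\<Sum>s\<in>S. \<epsilon> * (w s * \<Delta> s * (ln (?y s / c s) + 1)))"
    unfolding sum_subtractf[symmetric]
  proof (rule sum_mono)
    fix s assume s: "s \<in> S"
    show "w s * ?y s * ln (?y s / c s) - w s * x s * ln (x s / c s)
        \<le> \<epsilon> * (w s * \<Delta> s * (ln (?y s / c s) + 1))"
    proof (cases "\<Delta> s = 0")
      case False
      then have "?y s * ln (?y s / c s) - x s * ln (x s / c s) \<le> (?y s - x s) * (ln (?y s / c s) + 1)"
        using elim(2) s x c by (intro mult_ln_div_diff_le) auto
      then have "w s * (?y s * ln (?y s / c s) - x s * ln (x s / c s))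
          \<le> w s * (\<epsilon> * \<Delta> s * (ln (?y s / c s) + 1))"
        using w s by (intro mult_left_mono) auto
      then show ?thesis by (simp add: right_diff_distrib mult_ac)
    qed simp
  qed
  also have "\<dots> < 0"
    using elim(1,3) by (simp add: sum_distrib_left[symmetric] mult_pos_neg)
  finally show ?case by simp
qed

section \<open>Feasible plans and swap perturbations\<close>

lemma prob_dist_sum_le_1:
  assumes "prob_dist p" and "finite A"
  shows "sum p A \<le> 1"
  using assms sum_le_suminf[of p A] by (auto simp: prob_dist_def sums_iff)

lemma prob_dist_sum_eq_1_iff:
  assumes p: "prob_dist p" and A: "finite A"
  shows "sum p A = 1 \<longleftrightarrow> (\<forall>j. j \<notin> A \<longrightarrow> p j = 0)"
proof
  assume sum: "sum p A = 1"
  show "\<forall>j. j \<notin> A \<longrightarrow> p j = 0"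
  proof (intro allI impI)
    fix j assume "j \<notin> A"
    then have "p j + sum p A \<le> 1"
      using prob_dist_sum_le_1[OF p, of "insert j A"] A by simp
    then show "p j = 0" using sum p by (simp add: prob_dist_def order_antisym)
  qed
next
  assume "\<forall>j. j \<notin> A \<longrightarrow> p j = 0"
  then have "p sums sum p A" by (intro sums_finite A) auto
  with p show "sum p A = 1" by (auto simp: prob_dist_def sums_iff)
qed

lemma finite_add_le: "finite {j::nat. k + j \<le> n}"
  by (rule finite_subset[of _ "{..n}"]) auto

lemma sum_triangle_reindex:
  fixes g :: "nat \<Rightarrow> nat \<Rightarrow> 'a::comm_monoid_add"
  assumes "finite K"
  shows "(\<Sum>i\<le>n. \<Sum>k\<in>{k\<in>K. k \<le> i}. g k (i - k)) = (\<Sum>k\<in>K. \<Sum>j\<in>{j. k + j \<le> n}. g k j)"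
proof -
  have "(\<Sum>i\<le>n. \<Sum>k\<in>{k\<in>K. k \<le> i}. g k (i - k)) = (\<Sum>(i, k)\<in>Sigma {..n} (\<lambda>i. {k\<in>K. k \<le> i}). g k (i - k))"
    using assms by (intro sum.Sigma) auto
  also have "\<dots> = (\<Sum>(k, j)\<in>Sigma K (\<lambda>k. {j. k + j \<le> n}). g k j)"
    by (rule sum.reindex_bij_witness[where i="\<lambda>(k, j). (k + j, k)" and j="\<lambda>(i, k). (k, i - k)"]) auto
  also have "\<dots> = (\<Sum>k\<in>K. \<Sum>j\<in>{j. k + j \<le> n}. g k j)"
    using assms finite_add_le by (intro sum.Sigma[symmetric]) auto
  finally show ?thesis .
qed

(* The overflow mass omega_{I+} is 0 by the paper's convention, so omega lives on {0..I}. *)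
locale endpoint_problem =
  fixes I :: nat and \<beta> :: real and \<alpha> \<omega> :: "nat \<Rightarrow> real"
  assumes beta_pos: "0 < \<beta>"
    and alpha_nonneg: "\<forall>j\<le>Suc I. 0 \<le> \<alpha> j" and alpha_sum: "(\<Sum>j\<le>Suc I. \<alpha> j) = 1"
    and alpha0_pos: "0 < \<alpha> 0"
    and omega_sum: "(\<Sum>j\<le>I. \<omega> j) = 1"
    and irreducible: "\<forall>i<I. (\<Sum>j\<le>i. \<omega> j) < (\<Sum>j\<le>i. \<alpha> j)"
begin

abbreviation "K \<equiv> Kset I \<alpha>"
abbreviation "feasible \<equiv> pi_feasible I \<alpha> \<omega> \<beta>"

lemma finite_K: "finite K" and zero_in_K: "0 \<in> K" and alpha_pos: "k \<in> K \<Longrightarrow> 0 < \<alpha> k"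
  using alpha0_pos by (auto simp: Kset_def)

lemma alpha_eq_0: "j \<le> Suc I \<Longrightarrow> j \<notin> K \<Longrightarrow> \<alpha> j = 0"
  using alpha_nonneg by (force simp: Kset_def)

lemma sum_alpha_K: "(\<Sum>k\<in>K. \<alpha> k) = 1"
  using alpha_sum alpha_eq_0 by (subst sum.mono_neutral_left[of "{..Suc I}"]) (auto simp: Kset_def)

lemma poisson_pos: "0 < poisson j \<beta>"
  using beta_pos by (simp add: poisson_def)

lemma feasibleD:
  assumes "feasible \<pi>" and "k \<in> K"
  shows "prob_dist (\<pi> k)" and "0 \<le> \<pi> k j" and "summable (\<lambda>j. real j * \<pi> k j)"
  using assms by (auto simp: pi_feasible_def prob_dist_def)

lemma feasible_mean: "feasible \<pi> \<Longrightarrow> (\<Sum>k\<in>K. \<alpha> k * (\<Sum>j. real j * \<pi> k j)) = \<beta>"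
  and feasible_omega: "feasible \<pi> \<Longrightarrow> i \<le> I \<Longrightarrow> \<omega> i = (\<Sum>k\<in>{k\<in>K. k \<le> i}. \<alpha> k * \<pi> k (i - k))"
  by (auto simp: pi_feasible_def)

lemma feasible_cumulative:
  assumes "feasible \<pi>" and "t \<le> I"
  shows "(\<Sum>i\<le>t. \<omega> i) = (\<Sum>k\<in>K. \<alpha> k * (\<Sum>j\<in>{j. k + j \<le> t}. \<pi> k j))"
proof -
  have "(\<Sum>i\<le>t. \<omega> i) = (\<Sum>i\<le>t. \<Sum>k\<in>{k\<in>K. k \<le> i}. \<alpha> k * \<pi> k (i - k))"
    using assms feasible_omega[OF assms(1)] by simp
  also have "\<dots> = (\<Sum>k\<in>K. \<Sum>j\<in>{j. k + j \<le> t}. \<alpha> k * \<pi> k j)"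
    by (rule sum_triangle_reindex[OF finite_K, where n = t and g = "\<lambda>k j. \<alpha> k * \<pi> k j"])
  finally show ?thesis by (simp add: sum_distrib_left)
qed

lemma feasible_row_mass:
  assumes feas: "feasible \<pi>" and k: "k \<in> K"
  shows "(\<Sum>j\<in>{j. k + j \<le> I}. \<pi> k j) = 1"
proof -
  define m where "m q = (\<Sum>j\<in>{j. q + j \<le> I}. \<pi> q j)" for q
  have m_le: "m q \<le> 1" if "q \<in> K" for q
    unfolding m_def using prob_dist_sum_le_1[OF feasibleD(1)[OF feas that] finite_add_le] .
  have "(\<Sum>q\<in>K. \<alpha> q * m q) = 1"
    using feasible_cumulative[OF feas order_refl] omega_sum by (simp add: m_def)
  then have deficit: "(\<Sum>q\<in>K. \<alpha> q * (1 - m q)) = 0"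
    using sum_alpha_K by (simp add: right_diff_distrib sum_subtractf)
  have nonneg: "0 \<le> \<alpha> q * (1 - m q)" if "q \<in> K" for q
    using m_le[OF that] alpha_pos[OF that] by (intro mult_nonneg_nonneg) auto
  have "\<forall>q\<in>K. \<alpha> q * (1 - m q) = 0"
    using sum_nonneg_eq_0_iff[OF finite_K nonneg] deficit by simp
  then have "\<alpha> k * (1 - m k) = 0" using k by blast
  then show ?thesis using alpha_pos[OF k] by (simp add: m_def)
qed

lemma feasible_K_le: "feasible \<pi> \<Longrightarrow> k \<in> K \<Longrightarrow> k \<le> I"
  using feasible_row_mass[of \<pi> k] by (cases "k \<le> I") auto

lemma feasible_vanishes_beyond:
  assumes "feasible \<pi>" and "k \<in> K" and "I < k + j"
  shows "\<pi> k j = 0"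
  using feasible_row_mass[OF assms(1,2)] assms
  by (simp add: prob_dist_sum_eq_1_iff[OF feasibleD(1)[OF assms(1,2)] finite_add_le])

lemma feasible_crosses:
  assumes feas: "feasible \<pi>" and t: "t < I"
  shows "\<exists>r\<in>K. \<exists>j. r \<le> t \<and> t < r + j \<and> r + j \<le> I \<and> 0 < \<pi> r j"
proof (rule ccontr)
  assume no_cross: "\<not> ?thesis"
  have row: "(\<Sum>j\<in>{j. k + j \<le> t}. \<pi> k j) = (if k \<le> t then 1 else 0)" if k: "k \<in> K" for k
  proof (cases "k \<le> t")
    case True
    have "\<pi> k j = 0" if "t < k + j" for j
    proof (cases "k + j \<le> I")
      case False
      then show ?thesis using feasible_vanishes_beyond[OF feas k] by simp
    next
      case True
      with no_cross k \<open>k \<le> t\<close> that have "\<not> 0 < \<pi> k j" by blast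
      then show ?thesis using feasibleD(2)[OF feas k, of j] by linarith
    qed
    then show ?thesis
      using True prob_dist_sum_eq_1_iff[OF feasibleD(1)[OF feas k] finite_add_le] by simp
  qed simp
  have "(\<Sum>i\<le>t. \<omega> i) = (\<Sum>k\<in>K. if k \<le> t then \<alpha> k else 0)"
    unfolding feasible_cumulative[OF feas less_imp_le[OF t]] by (intro sum.cong) (simp_all add: row)
  also have "\<dots> = (\<Sum>k\<in>{k\<in>K. k \<le> t}. \<alpha> k)"
    by (simp add: sum.inter_filter[OF finite_K])
  also have "\<dots> = (\<Sum>j\<le>t. \<alpha> j)"
  proof (rule sum.mono_neutral_left)
    show "\<forall>i\<in>{..t} - {k\<in>K. k \<le> t}. \<alpha> i = 0"
    proof
      fix i assume "i \<in> {..t} - {k\<in>K. k \<le> t}"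
      then show "\<alpha> i = 0" using t by (intro alpha_eq_0) auto
    qed
  qed auto
  finally show False using irreducible t by auto
qed

lemma feasible_column_pos:
  assumes feas: "feasible \<pi>" and "i \<le> I" and "0 < \<omega> i"
  shows "\<exists>r\<in>K. r \<le> i \<and> 0 < \<pi> r (i - r)"
proof (rule ccontr)
  assume "\<not> ?thesis"
  then have "(\<Sum>r\<in>{r\<in>K. r \<le> i}. \<alpha> r * \<pi> r (i - r)) \<le> 0"
    using feasibleD(2)[OF feas] by (intro sum_nonpos) (auto simp: mult_le_0_iff)
  then show False using feasible_omega[OF feas] assms by simp
qed

lemma feasible_vanishes:
  assumes feas: "feasible \<pi>" and k: "k \<in> K" and off: "\<not> (k + j \<le> I \<and> 0 < \<omega> (k + j))"
  shows "\<pi> k j = 0"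
proof (cases "k + j \<le> I")
  case True
  let ?i = "k + j"
  have terms_nonneg: "\<forall>q\<in>{q\<in>K. q \<le> ?i}. 0 \<le> \<alpha> q * \<pi> q (?i - q)"
    using alpha_pos feasibleD(2)[OF feas] by (auto intro: mult_nonneg_nonneg less_imp_le)
  then have "0 \<le> \<omega> ?i"
    unfolding feasible_omega[OF feas True] by (intro sum_nonneg) auto
  then have "(\<Sum>q\<in>{q\<in>K. q \<le> ?i}. \<alpha> q * \<pi> q (?i - q)) = 0"
    using feasible_omega[OF feas True] True off by simp
  then have "\<alpha> k * \<pi> k (?i - k) = 0"
    using sum_nonneg_eq_0_iff[of "{q\<in>K. q \<le> ?i}" "\<lambda>q. \<alpha> q * \<pi> q (?i - q)"] terms_nonneg finite_K k
    by auto
  then show ?thesis using alpha_pos[OF k] by simp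
qed (use feasible_vanishes_beyond[OF feas k] in simp)

lemma objective_eq:
  assumes feas: "feasible \<pi>"
  shows "objective I \<alpha> \<beta> \<pi> = ereal (\<Sum>q\<in>K. \<alpha> q * (\<Sum>j\<le>I. \<pi> q j * ln (\<pi> q j / poisson j \<beta>)))"
proof -
  have "rel_entropy (\<pi> q) (\<lambda>j. poisson j \<beta>) = ereal (\<Sum>j\<le>I. \<pi> q j * ln (\<pi> q j / poisson j \<beta>))"
    if q: "q \<in> K" for q
  proof -
    have "(\<lambda>j. \<pi> q j * ln (\<pi> q j / poisson j \<beta>)) sums (\<Sum>j\<le>I. \<pi> q j * ln (\<pi> q j / poisson j \<beta>))"
      by (rule sums_finite) (use feasible_vanishes_beyond[OF feas q] in auto)
    then show ?thesis by (auto simp: rel_entropy_def sums_iff)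
  qed
  then have "objective I \<alpha> \<beta> \<pi> = (\<Sum>q\<in>K. ereal (\<alpha> q * (\<Sum>j\<le>I. \<pi> q j * ln (\<pi> q j / poisson j \<beta>))))"
    unfolding objective_def by (intro sum.cong) auto
  then show ?thesis by simp
qed

lemma sum_cells: "(\<Sum>s\<in>K \<times> {..I}. \<alpha> (fst s) * g (fst s) (snd s)) = (\<Sum>q\<in>K. \<alpha> q * (\<Sum>j\<le>I. g q j))"
  by (simp add: sum.cartesian_product sum_distrib_left split_def)

lemma feasible_perturb:
  assumes feas: "feasible \<pi>"
    and nonneg: "\<forall>q\<in>K. \<forall>j. 0 \<le> \<pi> q j + \<epsilon> * \<Delta> q j"
    and beyond: "\<forall>q\<in>K. \<forall>j>I. \<Delta> q j = 0"
    and row: "\<forall>q\<in>K. (\<Sum>j\<le>I. \<Delta> q j) = 0"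
    and mean: "(\<Sum>q\<in>K. \<alpha> q * (\<Sum>j\<le>I. \<Delta> q j * real j)) = 0"
    and column: "\<forall>i\<le>I. (\<Sum>q\<in>{q\<in>K. q \<le> i}. \<alpha> q * \<Delta> q (i - q)) = 0"
  shows "feasible (\<lambda>q j. \<pi> q j + \<epsilon> * \<Delta> q j)"
proof -
  have \<Delta>_sums: "(\<lambda>j. f j * \<Delta> q j) sums (\<Sum>j\<le>I. f j * \<Delta> q j)" if "q \<in> K" for q and f :: "nat \<Rightarrow> real"
    by (rule sums_finite) (use beyond that in auto)
  have dist: "prob_dist (\<lambda>j. \<pi> q j + \<epsilon> * \<Delta> q j)" if q: "q \<in> K" for q
    using sums_add[OF _ sums_mult[OF \<Delta>_sums[OF q, of "\<lambda>_. 1"]], of "\<pi> q" 1 \<epsilon>]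
      feasibleD(1)[OF feas q] nonneg row q by (auto simp: prob_dist_def)
  have mean_sums: "(\<lambda>j. real j * (\<pi> q j + \<epsilon> * \<Delta> q j)) sums
      ((\<Sum>j. real j * \<pi> q j) + \<epsilon> * (\<Sum>j\<le>I. real j * \<Delta> q j))" if q: "q \<in> K" for q
    using sums_add[OF summable_sums[OF feasibleD(3)[OF feas q]] sums_mult[OF \<Delta>_sums[OF q, of real], of \<epsilon>]]
    by (simp add: algebra_simps)
  have "(\<Sum>q\<in>K. \<alpha> q * (\<Sum>j. real j * (\<pi> q j + \<epsilon> * \<Delta> q j))) =
      (\<Sum>q\<in>K. \<alpha> q * (\<Sum>j. real j * \<pi> q j) + \<epsilon> * (\<alpha> q * (\<Sum>j\<le>I. real j * \<Delta> q j)))"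
    using mean_sums by (intro sum.cong) (auto simp: sums_iff algebra_simps)
  also have "\<dots> = \<beta> + \<epsilon> * (\<Sum>q\<in>K. \<alpha> q * (\<Sum>j\<le>I. \<Delta> q j * real j))"
    using feasible_mean[OF feas] by (simp add: sum.distrib sum_distrib_left mult.commute[of "real _"])
  finally have "(\<Sum>q\<in>K. \<alpha> q * (\<Sum>j. real j * (\<pi> q j + \<epsilon> * \<Delta> q j))) = \<beta>"
    using mean by simp
  moreover have "\<omega> i = (\<Sum>q\<in>{q\<in>K. q \<le> i}. \<alpha> q * (\<pi> q (i - q) + \<epsilon> * \<Delta> q (i - q)))" if "i \<le> I" for i
  proof -
    have "(\<Sum>q\<in>{q\<in>K. q \<le> i}. \<alpha> q * (\<pi> q (i - q) + \<epsilon> * \<Delta> q (i - q))) =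
        (\<Sum>q\<in>{q\<in>K. q \<le> i}. \<alpha> q * \<pi> q (i - q)) + \<epsilon> * (\<Sum>q\<in>{q\<in>K. q \<le> i}. \<alpha> q * \<Delta> q (i - q))"
      by (simp add: distrib_left sum.distrib sum_distrib_left mult.left_commute)
    then show ?thesis using feasible_omega[OF feas that] column that by simp
  qed
  ultimately show ?thesis
    unfolding pi_feasible_def using dist sums_summable[OF mean_sums] by simp
qed

lemma feasible_eventually:
  assumes feas: "feasible \<pi>"
    and sign: "\<forall>q\<in>K. \<forall>j\<le>I. \<pi> q j = 0 \<longrightarrow> 0 \<le> \<Delta> q j"
    and beyond: "\<forall>q\<in>K. \<forall>j>I. \<Delta> q j = 0"
    and row: "\<forall>q\<in>K. (\<Sum>j\<le>I. \<Delta> q j) = 0"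
    and mean: "(\<Sum>q\<in>K. \<alpha> q * (\<Sum>j\<le>I. \<Delta> q j * real j)) = 0"
    and column: "\<forall>i\<le>I. (\<Sum>q\<in>{q\<in>K. q \<le> i}. \<alpha> q * \<Delta> q (i - q)) = 0"
  shows "\<forall>\<^sub>F \<epsilon> in at_right 0. feasible (\<lambda>q j. \<pi> q j + \<epsilon> * \<Delta> q j)"
proof -
  have "\<forall>\<^sub>F \<epsilon> in at_right 0. \<forall>s\<in>K \<times> {..I}. \<Delta> (fst s) (snd s) \<noteq> 0 \<longrightarrow>
      0 < \<pi> (fst s) (snd s) + \<epsilon> * \<Delta> (fst s) (snd s)"
    using finite_K feasibleD(2)[OF feas] sign by (intro eventually_perturbation_pos) auto
  then show ?thesis
  proof eventually_elim
    case (elim \<epsilon>)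
    have "0 \<le> \<pi> q j + \<epsilon> * \<Delta> q j" if q: "q \<in> K" for q j
    proof (cases "j \<le> I \<and> \<Delta> q j \<noteq> 0")
      case True
      with elim q show ?thesis by (auto intro: less_imp_le)
    next
      case False
      with beyond q have "\<Delta> q j = 0" by (auto simp: not_le)
      with feasibleD(2)[OF feas q] show ?thesis by simp
    qed
    then show ?case using feasible_perturb[OF feas _ beyond row mean column] by blast
  qed
qed

(* A unit of endpoint mass placed by population k, which has weight alpha_k. *)
definition cell :: "nat \<Rightarrow> nat \<Rightarrow> nat \<Rightarrow> nat \<Rightarrow> real" where
  "cell k j q j' = (if q = k \<and> j' = j then 1 / \<alpha> k else 0)"

lemma cell_row_sum: "j \<le> I \<Longrightarrow> (\<Sum>j'\<le>I. cell k j q j') = (if q = k then 1 / \<alpha> k else 0)"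
  by (cases "q = k") (simp_all add: cell_def)

lemma cell_column_sum:
  assumes "k \<in> K"
  shows "(\<Sum>q\<in>{q\<in>K. q \<le> i}. \<alpha> q * cell k j q (i - q)) = (if i = k + j then 1 else 0)"
proof -
  have "(\<Sum>q\<in>{q\<in>K. q \<le> i}. \<alpha> q * cell k j q (i - q)) =
      (\<Sum>q\<in>{q\<in>K. q \<le> i}. if q = k then (if i - k = j then 1 else 0) else 0)"
    using alpha_pos[OF assms] by (intro sum.cong) (auto simp: cell_def)
  also have "\<dots> = (if i = k + j then 1 else 0)"
    using assms finite_K by auto
  finally show ?thesis .
qed

lemma cell_pairing:
  assumes "k \<in> K" and "j \<le> I"
  shows "(\<Sum>q\<in>K. \<alpha> q * (\<Sum>j'\<le>I. cell k j q j' * f q j')) = f k j"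
proof -
  have "cell k j q j' * f q j' = (if q = k \<and> j' = j then f k j / \<alpha> k else 0)" for q j'
    by (simp add: cell_def)
  then have "\<alpha> q * (\<Sum>j'\<le>I. cell k j q j' * f q j') = (if q = k then f k j else 0)" for q
    using alpha_pos[OF assms(1)] assms(2) by (cases "q = k") simp_all
  then show ?thesis using assms(1) finite_K by simp
qed

(* Row k moves a unit from endpoint a to b and row r moves one from b back to a, so the
   endpoint distribution and the mean are unchanged. *)
definition swap :: "nat \<Rightarrow> nat \<Rightarrow> nat \<Rightarrow> nat \<Rightarrow> nat \<Rightarrow> nat \<Rightarrow> real" where
  "swap k r a b q j = cell k (b - k) q j - cell k (a - k) q j + cell r (a - r) q j - cell r (b - r) q j"

context
  fixes k r a b :: nat
  assumes rows: "k \<in> K" "r \<in> K" and ends: "k \<le> a" "k \<le> b" "r \<le> a" "r \<le> b" "a \<le> I" "b \<le> I"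
begin

lemma swap_pairing:
  "(\<Sum>q\<in>K. \<alpha> q * (\<Sum>j\<le>I. swap k r a b q j * f q j)) = f k (b - k) - f k (a - k) + f r (a - r) - f r (b - r)"
  using rows ends
  by (simp add: swap_def left_diff_distrib distrib_right right_diff_distrib distrib_left
      sum.distrib sum_subtractf cell_pairing)

lemma swap_eventually_feasible:
  assumes feas: "feasible \<pi>"
    and sign: "\<forall>q\<in>K. \<forall>j\<le>I. \<pi> q j = 0 \<longrightarrow> 0 \<le> swap k r a b q j"
  shows "\<forall>\<^sub>F \<epsilon> in at_right 0. feasible (\<lambda>q j. \<pi> q j + \<epsilon> * swap k r a b q j)"
proof (rule feasible_eventually[OF feas sign])
  show "\<forall>q\<in>K. \<forall>j>I. swap k r a b q j = 0"
    using ends by (auto simp: swap_def cell_def)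
  show "\<forall>q\<in>K. (\<Sum>j\<le>I. swap k r a b q j) = 0"
    using ends by (simp add: swap_def sum.distrib sum_subtractf cell_row_sum)
  show "(\<Sum>q\<in>K. \<alpha> q * (\<Sum>j\<le>I. swap k r a b q j * real j)) = 0"
    using ends by (simp add: swap_pairing)
  show "\<forall>i\<le>I. (\<Sum>q\<in>{q\<in>K. q \<le> i}. \<alpha> q * swap k r a b q (i - q)) = 0"
    using rows ends
    by (simp add: swap_def right_diff_distrib distrib_left sum.distrib sum_subtractf cell_column_sum)
qed

lemma swap_nonneg:
  "\<not> (q = k \<and> j = a - k) \<Longrightarrow> \<not> (q = r \<and> j = b - r) \<Longrightarrow> 0 \<le> swap k r a b q j"
  using alpha_pos[OF rows(1)] alpha_pos[OF rows(2)] by (auto simp: swap_def cell_def)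

lemma swap_gain:
  assumes "k \<noteq> r" and "a \<noteq> b"
  shows "swap k r a b k (b - k) \<noteq> 0" and "swap k r a b r (a - r) \<noteq> 0"
  using assms ends alpha_pos[OF rows(1)] alpha_pos[OF rows(2)] by (auto simp: swap_def cell_def)

end

end

section \<open>Stationarity of the minimiser\<close>

locale endpoint_minimizer = endpoint_problem +
  fixes x :: "nat \<Rightarrow> nat \<Rightarrow> real"
  assumes minimizer_feasible: "pi_feasible I \<alpha> \<omega> \<beta> x"
    and minimizer_le: "\<forall>\<pi>. pi_feasible I \<alpha> \<omega> \<beta> \<pi> \<longrightarrow> objective I \<alpha> \<beta> x \<le> objective I \<alpha> \<beta> \<pi>"
begin

lemma minimizer_nonneg: "q \<in> K \<Longrightarrow> 0 \<le> x q j"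
  using feasibleD(2)[OF minimizer_feasible] .

lemma no_descent_direction:
  assumes feasible: "\<forall>\<^sub>F \<epsilon> in at_right 0. feasible (\<lambda>q j. x q j + \<epsilon> * \<Delta> q j)"
    and sign: "\<forall>q\<in>K. \<forall>j\<le>I. x q j = 0 \<longrightarrow> 0 \<le> \<Delta> q j"
  shows "(\<forall>q\<in>K. \<forall>j\<le>I. x q j = 0 \<longrightarrow> \<Delta> q j = 0) \<and>
    0 \<le> (\<Sum>q\<in>K. \<alpha> q * (\<Sum>j\<le>I. \<Delta> q j * (ln (x q j / poisson j \<beta>) + 1)))"
proof (rule ccontr)
  define F where "F \<pi> = (\<Sum>q\<in>K. \<alpha> q * (\<Sum>j\<le>I. \<pi> q j * ln (\<pi> q j / poisson j \<beta>)))" for \<pi>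
  let ?S = "K \<times> {..I}" and ?x = "\<lambda>s. x (fst s) (snd s)" and ?\<Delta> = "\<lambda>s. \<Delta> (fst s) (snd s)"
    and ?w = "\<lambda>s. \<alpha> (fst s)" and ?c = "\<lambda>s. poisson (snd s) \<beta>"
  have F_cells: "F \<pi> = (\<Sum>s\<in>?S. ?w s * (\<pi> (fst s) (snd s) * ln (\<pi> (fst s) (snd s) / ?c s)))" for \<pi>
    by (simp add: F_def sum_cells[symmetric])
  assume "\<not> ?thesis"
  then have "(\<exists>s\<in>?S. ?x s = 0 \<and> ?\<Delta> s \<noteq> 0) \<or> (\<Sum>s\<in>?S. ?w s * ?\<Delta> s * (ln (?x s / ?c s) + 1)) < 0"
    by (auto simp: sum_cells[where g = "\<lambda>q j. \<Delta> q j * (ln (x q j / poisson j \<beta>) + 1)"] mult.assoc)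
  then have "\<forall>\<^sub>F \<epsilon> in at_right 0. (\<Sum>s\<in>?S. ?w s * (?x s + \<epsilon> * ?\<Delta> s) * ln ((?x s + \<epsilon> * ?\<Delta> s) / ?c s))
      < (\<Sum>s\<in>?S. ?w s * ?x s * ln (?x s / ?c s))"
    using finite_K alpha_pos poisson_pos minimizer_nonneg sign
    by (intro weighted_entropy_eventually_less) auto
  then have "\<forall>\<^sub>F \<epsilon> in at_right 0. F (\<lambda>q j. x q j + \<epsilon> * \<Delta> q j) < F x"
    by (simp add: F_cells mult.assoc)
  with feasible have "\<forall>\<^sub>F \<epsilon> in at_right 0. feasible (\<lambda>q j. x q j + \<epsilon> * \<Delta> q j) \<and>
      F (\<lambda>q j. x q j + \<epsilon> * \<Delta> q j) < F x"
    by eventually_elim simp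
  then obtain \<epsilon> where "feasible (\<lambda>q j. x q j + \<epsilon> * \<Delta> q j)" and "F (\<lambda>q j. x q j + \<epsilon> * \<Delta> q j) < F x"
    using eventually_happens'[OF trivial_limit_at_right_real] by blast
  then show False
    using minimizer_le objective_eq minimizer_feasible by (fastforce simp: F_def)
qed

definition likelihood_ratio :: "nat \<Rightarrow> nat \<Rightarrow> real" where
  "likelihood_ratio k i = x k (i - k) / poisson (i - k) \<beta>"

lemma swap_stationary:
  assumes rows: "k \<in> K" "r \<in> K" and ends: "k \<le> a" "k \<le> b" "r \<le> a" "r \<le> b" "a \<le> I" "b \<le> I"
    and distinct: "k \<noteq> r" "a \<noteq> b" and pos: "0 < x k (a - k)" "0 < x r (b - r)"
  shows "0 < x k (b - k) \<and> 0 < x r (a - r) \<and>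
    ln (likelihood_ratio k a) + ln (likelihood_ratio r b) \<le> ln (likelihood_ratio k b) + ln (likelihood_ratio r a)"
proof -
  have sign: "\<forall>q\<in>K. \<forall>j\<le>I. x q j = 0 \<longrightarrow> 0 \<le> swap k r a b q j"
    using pos by (auto intro: swap_nonneg[OF rows ends])
  have "(\<forall>q\<in>K. \<forall>j\<le>I. x q j = 0 \<longrightarrow> swap k r a b q j = 0) \<and>
      0 \<le> (\<Sum>q\<in>K. \<alpha> q * (\<Sum>j\<le>I. swap k r a b q j * (ln (x q j / poisson j \<beta>) + 1)))"
    by (rule no_descent_direction[OF swap_eventually_feasible[OF rows ends minimizer_feasible sign] sign])
  then have vanish: "\<forall>q\<in>K. \<forall>j\<le>I. x q j = 0 \<longrightarrow> swap k r a b q j = 0"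
    and slope: "0 \<le> ln (likelihood_ratio k b) - ln (likelihood_ratio k a) + ln (likelihood_ratio r a) - ln (likelihood_ratio r b)"
    by (simp_all add: swap_pairing[OF rows ends] likelihood_ratio_def)
  have "x k (b - k) \<noteq> 0" and "x r (a - r) \<noteq> 0"
    using vanish swap_gain[OF rows ends distinct] rows ends by auto
  then show ?thesis
    using slope minimizer_nonneg[OF rows(1), of "b - k"] minimizer_nonneg[OF rows(2), of "a - r"] by auto
qed

lemma likelihood_ratio_cross:
  assumes rows: "k \<in> K" "r \<in> K" and ends: "k \<le> a" "k \<le> b" "r \<le> a" "r \<le> b" "a \<le> I" "b \<le> I"
    and pos: "0 < x k (a - k)" "0 < x r (b - r)"
  shows "likelihood_ratio k a * likelihood_ratio r b = likelihood_ratio k b * likelihood_ratio r a"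
proof (cases "k = r \<or> a = b")
  case False
  then have distinct: "k \<noteq> r" "a \<noteq> b" by auto
  from swap_stationary[OF rows ends distinct pos]
  have pos': "0 < x k (b - k)" "0 < x r (a - r)"
    and le: "ln (likelihood_ratio k a) + ln (likelihood_ratio r b) \<le> ln (likelihood_ratio k b) + ln (likelihood_ratio r a)" by auto
  from swap_stationary[OF rows ends(2,1,4,3,6,5) distinct(1) distinct(2)[symmetric] pos']
  have "ln (likelihood_ratio k b) + ln (likelihood_ratio r a) \<le> ln (likelihood_ratio k a) + ln (likelihood_ratio r b)" by auto
  moreover have ratios_pos: "0 < likelihood_ratio k a" "0 < likelihood_ratio r b" "0 < likelihood_ratio k b" "0 < likelihood_ratio r a"
    using pos pos' poisson_pos by (simp_all add: likelihood_ratio_def)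
  ultimately have "ln (likelihood_ratio k a * likelihood_ratio r b) = ln (likelihood_ratio k b * likelihood_ratio r a)"
    using le by (simp add: ln_mult)
  then show ?thesis using ratios_pos by simp
qed auto

lemma minimizer_pos_last:
  assumes k: "k \<in> K"
  shows "0 < x k (I - k)"
proof (rule ccontr)
  assume "\<not> 0 < x k (I - k)"
  \<comment> \<open>m is the last occupied displacement of row k; a row r straddling k + m, provided by
    irreducibility, allows a swap that would move mass of row k beyond m.\<close>
  define J where "J = {j. k + j \<le> I \<and> 0 < x k j}"
  have finite_J: "finite J" unfolding J_def by (rule finite_subset[of _ "{..I}"]) auto
  have "J \<noteq> {}"
  proof
    assume "J = {}"
    then have "x k j = 0" if "k + j \<le> I" for j
      using that minimizer_nonneg[OF k, of j] by (force simp: J_def)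
    then show False using feasible_row_mass[OF minimizer_feasible k] by simp
  qed
  define m where "m = Max J"
  have m: "k + m \<le> I" "0 < x k m" and m_max: "\<And>j. j \<in> J \<Longrightarrow> j \<le> m"
    using Max_in[OF finite_J \<open>J \<noteq> {}\<close>] Max_ge[OF finite_J] by (auto simp: m_def J_def)
  with \<open>\<not> 0 < x k (I - k)\<close> have "k + m < I"
    by (metis add_diff_cancel_left' le_neq_implies_less)
  then obtain r j where r: "r \<in> K" "r \<le> k + m" "k + m < r + j" "r + j \<le> I" "0 < x r j"
    using feasible_crosses[OF minimizer_feasible] by blast
  have "r \<noteq> k"
    using r m_max[of j] by (auto simp: J_def)
  then have "0 < x k (r + j - k)"
    using swap_stationary[OF k r(1), of "k + m" "r + j"] r m by auto
  then have "r + j - k \<in> J" using r by (auto simp: J_def)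
  then show False using m_max r by fastforce
qed

lemma minimizer_pos:
  assumes k: "k \<in> K" and i: "k + j \<le> I" and \<omega>: "0 < \<omega> (k + j)"
  shows "0 < x k j"
proof -
  obtain r where r: "r \<in> K" "r \<le> k + j" "0 < x r (k + j - r)"
    using feasible_column_pos[OF minimizer_feasible i \<omega>] by blast
  consider "r = k" | "k + j = I" | "r \<noteq> k" "k + j \<noteq> I" by blast
  then show ?thesis
  proof cases
    case 1
    with r show ?thesis by simp
  next
    case 2
    then have "j = I - k" by simp
    with minimizer_pos_last[OF k] show ?thesis by simp
  next
    case 3
    have "k \<le> I" using feasible_K_le[OF minimizer_feasible k] .
    then show ?thesis
      using swap_stationary[OF k r(1), of I "k + j"] minimizer_pos_last[OF k] r i 3 by auto
  qed
qed

lemma likelihood_ratio_pos: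
  assumes "k \<in> K" and "k + j \<le> I" and "0 < \<omega> (k + j)"
  shows "0 < likelihood_ratio k (k + j)"
  using minimizer_pos[OF assms] poisson_pos by (simp add: likelihood_ratio_def)

lemma likelihood_ratio_last_pos: "k \<in> K \<Longrightarrow> 0 < likelihood_ratio k I"
  using minimizer_pos_last poisson_pos by (simp add: likelihood_ratio_def)

lemma likelihood_ratio_factorizes:
  assumes k: "k \<in> K" and i: "k + j \<le> I" "0 < \<omega> (k + j)"
  shows "x k j = likelihood_ratio k I / likelihood_ratio 0 I * poisson j \<beta> * likelihood_ratio 0 (k + j)"
proof -
  have "likelihood_ratio k (k + j) * likelihood_ratio 0 I = likelihood_ratio k I * likelihood_ratio 0 (k + j)"
    using likelihood_ratio_cross[OF k zero_in_K, of "k + j" I] minimizer_pos[OF k i]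
      minimizer_pos_last[OF zero_in_K] feasible_K_le[OF minimizer_feasible k] i
    by simp
  then have "likelihood_ratio k (k + j) = likelihood_ratio k I / likelihood_ratio 0 I * likelihood_ratio 0 (k + j)"
    using likelihood_ratio_last_pos[OF zero_in_K] by (simp add: field_simps)
  moreover have "x k j = poisson j \<beta> * likelihood_ratio k (k + j)"
    using poisson_pos[of j] by (simp add: likelihood_ratio_def)
  ultimately show ?thesis by (simp add: mult_ac)
qed

end

lemma Iset_no_overflow: "Iset I \<omega> 0 = {i. i \<le> I \<and> 0 < \<omega> i}"
  by (auto simp: Iset_def)

theorem theoremA9:
  fixes I :: nat and \<beta> :: real and \<alpha> \<omega> :: "nat \<Rightarrow> real" and \<omega>p :: real
    and \<pi>s :: "nat \<Rightarrow> nat \<Rightarrow> real"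
  assumes beta_pos: "0 < \<beta>"
    and alpha_simplex: "\<forall>j\<le>Suc I. 0 \<le> \<alpha> j" "(\<Sum>j\<le>Suc I. \<alpha> j) = 1"
    and alpha0: "0 < \<alpha> 0"
    and omega_simplex: "\<forall>j\<le>I. 0 \<le> \<omega> j" "0 \<le> \<omega>p" "(\<Sum>j\<le>I. \<omega> j) + \<omega>p = 1"
    and feasible: "\<forall>i\<le>I. (\<Sum>j\<le>i. \<omega> j) \<le> (\<Sum>j\<le>i. \<alpha> j)"
    and irreducible: "\<forall>i<I. (\<Sum>j\<le>i. \<omega> j) < (\<Sum>j\<le>i. \<alpha> j)"
    and equality: "(\<Sum>i\<le>I. real i * \<omega> i) + real (Suc I) * \<omega>p
                    = (\<Sum>k\<le>Suc I. real k * \<alpha> k) + \<beta>"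
    and convention: "\<omega>p = 0"
    and pis_feasible: "pi_feasible I \<alpha> \<omega> \<beta> \<pi>s"
    and pis_min: "\<forall>\<pi>. pi_feasible I \<alpha> \<omega> \<beta> \<pi> \<longrightarrow> objective I \<alpha> \<beta> \<pi>s \<le> objective I \<alpha> \<beta> \<pi>"
    and pis_unique: "\<forall>\<pi>. pi_feasible I \<alpha> \<omega> \<beta> \<pi> \<and>
                        (\<forall>\<sigma>. pi_feasible I \<alpha> \<omega> \<beta> \<sigma> \<longrightarrow> objective I \<alpha> \<beta> \<pi> \<le> objective I \<alpha> \<beta> \<sigma>)
                        \<longrightarrow> (\<forall>k\<in>Kset I \<alpha>. \<pi> k = \<pi>s k)"
  shows "\<exists>D W :: nat \<Rightarrow> real.
           (\<forall>k\<in>Kset I \<alpha>. 0 < D k) \<and> (\<forall>i\<in>Iset I \<omega> \<omega>p. 0 < W i) \<and>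
           (\<forall>k\<in>Kset I \<alpha>. \<forall>j. \<pi>s k j =
              (if k + j \<in> Iset I \<omega> \<omega>p then D k * poisson j \<beta> * W (k + j) else 0))"
proof -
  interpret endpoint_minimizer I \<beta> \<alpha> \<omega> \<pi>s
    using assms by unfold_locales simp_all
  define D where "D k = likelihood_ratio k I / likelihood_ratio 0 I" for k
  define W where "W i = likelihood_ratio 0 i" for i
  have "(\<forall>k\<in>K. 0 < D k) \<and> (\<forall>i\<in>Iset I \<omega> \<omega>p. 0 < W i) \<and>
      (\<forall>k\<in>K. \<forall>j. \<pi>s k j = (if k + j \<in> Iset I \<omega> \<omega>p then D k * poisson j \<beta> * W (k + j) else 0))"
    using likelihood_ratio_last_pos likelihood_ratio_last_pos[OF zero_in_K] likelihood_ratio_pos[OF zero_in_K]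
      likelihood_ratio_factorizes feasible_vanishes[OF minimizer_feasible]
    by (auto simp: Iset_no_overflow convention D_def W_def)
  then show ?thesis by blast
qed

end
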